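(* Let $c_1>0$ be a sufficiently small absolute constant and $K=\exp(c_1 s)$. For any fixed $\mathbf{A}\in\mathcal{A}_{\mathsf{suc}}$, with probability at least $1-\exp(-s/2)$ over $V=\{\mathbf{v}_1,\dots,\mathbf{v}_{16sK}\}$ drawn independently and uniformly from $\frac1{\sqrt d}\mathcal{H}_d$, $$\big|\mathcal{N}(\mathsf{O}^{\mathbf{M}_\mathbf{A}}(\mathbf{A},V),d^{-8})\big|\ge K.$$
   Context: Setting: $d$ large, $\delta\in(0,1)$, $k=d^{1-\delta-o(1)}$, $s=d^{1-\delta/2}\log^2 d$, $\xi=2\exp(-\log^5 d)$, $\xi'=\sqrt d\xi$, $\mathcal{H}_d=\{-1,1\}^d$, $\mathbb{S}^d$ the unit sphere. A fixed deterministic $(k,n)$-protocol: on $\mathbf{A}\in\{-1,1\}^{(d/2)\times d}$ Alice sends $\mathbf{M}_\mathbf{A}\in\{0,1\}^{kd}$; after receiving $\mathbf{v}\in\frac1{\sqrt d}\mathcal{H}_d$ she sends $\mathbf{R}_{\mathbf{A},\mathbf{v}}\in(\mathsf{row}(\mathbf{A})\cup\{\mathsf{nil}\})^n$; Bob outputs a unit vector $\mathbf{x}_{\mathbf{M},\mathbf{v},\mathbf{R}}\in\mathbb{S}^d$, defined for all $\mathbf{M}\in\{0,1\}^{kd}$, $\mathbf{v}$, $\mathbf{R}\in(\{-1,1\}^d\cup\{\mathsf{nil}\})^n$; $\mathbf{x}_{\mathbf{A},\mathbf{v}}=\mathbf{x}_{\mathbf{M}_\mathbf{A},\mathbf{v},\mathbf{R}_{\mathbf{A},\mathbf{v}}}$.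 Success on $(\mathbf{A},\mathbf{v})$: $\|\mathbf{A}\mathbf{x}_{\mathbf{A},\mathbf{v}}\|_\infty\le\xi'$ and $|\langle\mathbf{v},\mathbf{x}_{\mathbf{A},\mathbf{v}}\rangle|\ge\sqrt{s/d}$; the protocol succeeds with probability at least $1/2$ over uniform $(\mathbf{A},\mathbf{v})$. $\mathcal{A}_{\mathsf{suc}}$: the matrices $\mathbf{A}$ on which it succeeds with probability at least $1/4$ over uniform $\mathbf{v}$. For a matrix $\mathbf{B}\in\{-1,1\}^{m\times d}$ ($m\le d/2$), write $\mathbf{R}\subseteq\mathsf{row}(\mathbf{B})\cup\{\mathsf{nil}\}$ if every entry of $\mathbf{R}$ is $\mathsf{nil}$ or a row of $\mathbf{B}$. Table: $\mathsf{T}^{\mathbf{M}}(\mathbf{B},V)=\{\mathbf{x}_{\mathbf{M},\mathbf{v},\mathbf{R}}:\mathbf{v}\in V,\ \mathbf{R}\subseteq\mathsf{row}(\mathbf{B})\cup\{\mathsf{nil}\}\}$. Orthogonal entries: $\mathsf{O}^{\mathbf{M}}(\mathbf{B},V)=\{\mathbf{x}\in\mathsf{T}^{\mathbf{M}}(\mathbf{B},V):\|\mathbf{B}\mathbf{x}\|_\infty\le\xi'\}$. For $X\subseteq\mathbb{R}^d$ and $\alpha>0$, $\mathcal{N}(X,\alpha)$ denotes a largest subset $X'\subseteq X$ whose points have pairwise distance at least $\alpha$. *)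

theory Defs
  imports Complex_Main "HOL-Library.FuncSet"
begin

(* Vectors of R^d are represented as functions nat => real vanishing outside {0..<d};
   a matrix with m rows is a function nat => (nat => real), row i being B i,
   with all rows i >= m equal to zero. *)

definition hcube :: "nat \<Rightarrow> (nat \<Rightarrow> real) set" where
  "hcube d = {x. (\<forall>j<d. x j \<in> {-1, 1}) \<and> (\<forall>j\<ge>d. x j = 0)}"

definition scaled_hcube :: "nat \<Rightarrow> (nat \<Rightarrow> real) set" where
  "scaled_hcube d = {x. (\<forall>j<d. x j \<in> {-1 / sqrt d, 1 / sqrt d}) \<and> (\<forall>j\<ge>d. x j = 0)}"

definition sign_mats :: "nat \<Rightarrow> nat \<Rightarrow> (nat \<Rightarrow> nat \<Rightarrow> real) set" where
  "sign_mats m d = {B. (\<forall>i<m. B i \<in> hcube d) \<and> (\<forall>i\<ge>m. B i = (\<lambda>_. 0))}"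

definition unit_sphere_d :: "nat \<Rightarrow> (nat \<Rightarrow> real) set" where
  "unit_sphere_d d = {x. (\<forall>j\<ge>d. x j = 0) \<and> (\<Sum>j<d. (x j)^2) = 1}"

definition inner_d :: "nat \<Rightarrow> (nat \<Rightarrow> real) \<Rightarrow> (nat \<Rightarrow> real) \<Rightarrow> real" where
  "inner_d d x y = (\<Sum>j<d. x j * y j)"

definition dist_d :: "nat \<Rightarrow> (nat \<Rightarrow> real) \<Rightarrow> (nat \<Rightarrow> real) \<Rightarrow> real" where
  "dist_d d x y = sqrt (\<Sum>j<d. (x j - y j)^2)"

definition inf_norm_le :: "nat \<Rightarrow> nat \<Rightarrow> (nat \<Rightarrow> nat \<Rightarrow> real) \<Rightarrow> (nat \<Rightarrow> real) \<Rightarrow> real \<Rightarrow> bool" where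
  "inf_norm_le m d B x t = (\<forall>i<m. \<bar>\<Sum>j<d. B i j * x j\<bar> \<le> t)"

definition rows_sub :: "nat \<Rightarrow> (nat \<Rightarrow> nat \<Rightarrow> real) \<Rightarrow> (nat \<Rightarrow> real) option list \<Rightarrow> bool" where
  "rows_sub m B R = (\<forall>r\<in>set R. r = None \<or> (\<exists>i<m. r = Some (B i)))"

type_synonym out_fn = "bool list \<Rightarrow> (nat \<Rightarrow> real) \<Rightarrow> (nat \<Rightarrow> real) option list \<Rightarrow> (nat \<Rightarrow> real)"

definition is_protocol :: "nat \<Rightarrow> nat \<Rightarrow> nat \<Rightarrow> ((nat \<Rightarrow> nat \<Rightarrow> real) \<Rightarrow> bool list)
    \<Rightarrow> ((nat \<Rightarrow> nat \<Rightarrow> real) \<Rightarrow> (nat \<Rightarrow> real) \<Rightarrow> (nat \<Rightarrow> real) option list) \<Rightarrow> out_fn \<Rightarrow> bool" where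
  "is_protocol d k n msg resp out =
    ((\<forall>A\<in>sign_mats (d div 2) d. length (msg A) = k * d \<and>
        (\<forall>v\<in>scaled_hcube d. length (resp A v) = n \<and> rows_sub (d div 2) A (resp A v))) \<and>
     (\<forall>M v R. length M = k * d \<and> v \<in> scaled_hcube d \<and> length R = n \<and>
        (\<forall>r\<in>set R. r = None \<or> (\<exists>h\<in>hcube d. r = Some h)) \<longrightarrow> out M v R \<in> unit_sphere_d d))"

definition succeeds :: "nat \<Rightarrow> real \<Rightarrow> real \<Rightarrow> ((nat \<Rightarrow> nat \<Rightarrow> real) \<Rightarrow> bool list)
    \<Rightarrow> ((nat \<Rightarrow> nat \<Rightarrow> real) \<Rightarrow> (nat \<Rightarrow> real) \<Rightarrow> (nat \<Rightarrow> real) option list) \<Rightarrow> out_fn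
    \<Rightarrow> (nat \<Rightarrow> nat \<Rightarrow> real) \<Rightarrow> (nat \<Rightarrow> real) \<Rightarrow> bool" where
  "succeeds d s xi' msg resp out A v =
    (let x = out (msg A) v (resp A v)
     in inf_norm_le (d div 2) d A x xi' \<and> \<bar>inner_d d v x\<bar> \<ge> sqrt (s / d))"

definition A_suc :: "nat \<Rightarrow> real \<Rightarrow> real \<Rightarrow> ((nat \<Rightarrow> nat \<Rightarrow> real) \<Rightarrow> bool list)
    \<Rightarrow> ((nat \<Rightarrow> nat \<Rightarrow> real) \<Rightarrow> (nat \<Rightarrow> real) \<Rightarrow> (nat \<Rightarrow> real) option list) \<Rightarrow> out_fn
    \<Rightarrow> (nat \<Rightarrow> nat \<Rightarrow> real) set" where
  "A_suc d s xi' msg resp out =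
    {A \<in> sign_mats (d div 2) d.
       real (card {v \<in> scaled_hcube d. succeeds d s xi' msg resp out A v})
         \<ge> 1/4 * real (card (scaled_hcube d))}"

definition table :: "nat \<Rightarrow> nat \<Rightarrow> out_fn \<Rightarrow> bool list \<Rightarrow> (nat \<Rightarrow> nat \<Rightarrow> real)
    \<Rightarrow> (nat \<Rightarrow> real) set \<Rightarrow> (nat \<Rightarrow> real) set" where
  "table n m out M B V = {out M v R | v R. v \<in> V \<and> length R = n \<and> rows_sub m B R}"

definition orth_entries :: "nat \<Rightarrow> nat \<Rightarrow> nat \<Rightarrow> real \<Rightarrow> out_fn \<Rightarrow> bool list
    \<Rightarrow> (nat \<Rightarrow> nat \<Rightarrow> real) \<Rightarrow> (nat \<Rightarrow> real) set \<Rightarrow> (nat \<Rightarrow> real) set" where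
  "orth_entries d n m xi' out M B V = {x \<in> table n m out M B V. inf_norm_le m d B x xi'}"

definition separated :: "nat \<Rightarrow> real \<Rightarrow> (nat \<Rightarrow> real) set \<Rightarrow> bool" where
  "separated d \<alpha> Y = (\<forall>x\<in>Y. \<forall>y\<in>Y. x \<noteq> y \<longrightarrow> dist_d d x y \<ge> \<alpha>)"

definition packing_card :: "nat \<Rightarrow> (nat \<Rightarrow> real) set \<Rightarrow> real \<Rightarrow> nat" where
  "packing_card d X \<alpha> = Max (card ` {Y. Y \<subseteq> X \<and> finite Y \<and> separated d \<alpha> Y})"

end

theory Submission
  imports Defs "HOL-Probability.Hoeffding" "HOL-Analysis.L2_Norm"
begin

text \<open>
  For a fixed successful matrix A, a query v is good if Bob's answer x_v is nearly orthogonal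
  to the rows of A and correlates with v. Chernoff's bound for Rademacher sums shows that any
  fixed unit vector correlates with a random v only with probability 2 exp(-s/4). If the good
  answers to N = 16 s K random queries had a net of fewer than K points, all remaining queries
  would be either bad or correlated with one of fewer than K fixed answers, which happens for
  each of them with probability at most 7/8. Union-bounding over the choice of the net indices
  leaves a probability of at most exp(-s/2).
\<close>

subsection \<open>Chernoff bound on the scaled hypercube\<close>

lemma cosh_le_exp_half_square: "cosh (a::real) \<le> exp (a^2/2)"
proof -
  have nonneg: "cosh b \<le> exp (b^2/2)" if "b \<ge> 0" for b :: real
  proof -
    have "-(2*b) * (1/2) + ln (1 + (1/2) * (exp (2*b) - 1)) \<le> (2*b)\<^sup>2 / 8"
      using Hoeffdings_lemma_aux[of "2*b" "1/2"] that by simp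
    then have "ln ((1 + exp (2*b))/2) \<le> b + b^2/2"
      by (simp add: power2_eq_square field_simps)
    then have "(1 + exp (2*b))/2 \<le> exp (b + b^2/2)"
      by (smt (verit) exp_gt_zero exp_le_cancel_iff exp_ln)
    then have "exp (-b) * ((1 + exp (2*b))/2) \<le> exp (-b) * exp (b + b^2/2)" by simp
    moreover have "exp (-b) * ((1 + exp (2*b))/2) = cosh b"
      by (simp add: cosh_def field_simps flip: exp_add)
    moreover have "exp (-b) * exp (b + b^2/2) = exp (b^2/2)" by (simp flip: exp_add)
    ultimately show ?thesis by simp
  qed
  show ?thesis
    using nonneg[of a] nonneg[of "-a"] by (cases "a \<ge> 0") auto
qed

definition sign_vecs :: "nat \<Rightarrow> real \<Rightarrow> (nat \<Rightarrow> real) set" where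
  "sign_vecs n c = {x. (\<forall>j<n. x j \<in> {-c, c}) \<and> (\<forall>j\<ge>n. x j = 0)}"

lemma scaled_hcube_eq_sign_vecs: "scaled_hcube d = sign_vecs d (1 / sqrt d)"
  unfolding scaled_hcube_def sign_vecs_def by simp

lemma sign_vecs_0: "sign_vecs 0 c = {\<lambda>_. 0}"
  by (auto simp: sign_vecs_def)

lemma sign_vecs_Suc: "sign_vecs (Suc n) c = (\<lambda>(x,b). x(n:=b)) ` (sign_vecs n c \<times> {-c,c})"
proof (intro set_eqI iffI)
  fix y assume y: "y \<in> sign_vecs (Suc n) c"
  then have "y(n:=0) \<in> sign_vecs n c" "y n \<in> {-c,c}" by (auto simp: sign_vecs_def)
  then show "y \<in> (\<lambda>(x,b). x(n:=b)) ` (sign_vecs n c \<times> {-c,c})"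
    by (intro image_eqI[of _ _ "(y(n:=0), y n)"]) auto
qed (auto simp: sign_vecs_def less_Suc_eq)

lemma inj_on_upd_sign_vecs: "inj_on (\<lambda>(x,b). x(n:=b)) (sign_vecs n c \<times> {-c,c})"
proof (rule inj_onI, clarify)
  fix x b x' b' assume a: "x \<in> sign_vecs n c" "x' \<in> sign_vecs n c" "x(n:=b) = x'(n:=b')"
  have "x = (x(n:=b))(n:=0)" "x' = (x'(n:=b'))(n:=0)"
    using a(1,2) by (auto simp: sign_vecs_def)
  then show "x = x' \<and> b = b'" using a(3) by (metis fun_upd_same)
qed

lemma finite_sign_vecs: "finite (sign_vecs n c)"
  by (induction n) (auto simp: sign_vecs_0 sign_vecs_Suc)

lemma sum_exp_sign_vecs:
  assumes "c \<noteq> 0"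
  shows "(\<Sum>x\<in>sign_vecs n c. exp (\<Sum>j<n. x j * a j)) = (\<Prod>j<n. 2 * cosh (c * a j))"
proof (induction n)
  case 0 then show ?case by (simp add: sign_vecs_0)
next
  case (Suc n)
  let ?E = "\<lambda>x. exp (\<Sum>j<n. x j * a j)"
  have upd: "exp (\<Sum>j<Suc n. (x(n:=b)) j * a j) = ?E x * exp (b * a n)" for x b
  proof -
    have "(\<Sum>j<n. (x(n:=b)) j * a j) = (\<Sum>j<n. x j * a j)" by (rule sum.cong) auto
    then show ?thesis by (simp only: sum.lessThan_Suc) (simp add: exp_add)
  qed
  have "(\<Sum>x\<in>sign_vecs (Suc n) c. exp (\<Sum>j<Suc n. x j * a j))
      = (\<Sum>p\<in>sign_vecs n c \<times> {-c,c}. exp (\<Sum>j<Suc n. ((fst p)(n:=snd p)) j * a j))"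
    unfolding sign_vecs_Suc
    by (subst sum.reindex[OF inj_on_upd_sign_vecs]) (simp add: case_prod_unfold)
  also have "\<dots> = (\<Sum>p\<in>sign_vecs n c \<times> {-c,c}. ?E (fst p) * exp (snd p * a n))"
    by (simp only: upd)
  also have "\<dots> = (\<Sum>x\<in>sign_vecs n c. \<Sum>b\<in>{-c,c}. ?E x * exp (b * a n))"
    by (simp add: sum.cartesian_product case_prod_unfold)
  also have "\<dots> = (\<Sum>x\<in>sign_vecs n c. ?E x) * (2 * cosh (c * a n))"
  proof -
    have "(\<Sum>b\<in>{-c,c}. E * exp (b * a n)) = E * (2 * cosh (c * a n))" for E
      using assms by (simp add: cosh_def algebra_simps)
    then show ?thesis by (simp add: sum_distrib_right)
  qed
  finally show ?case using Suc by simp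
qed

lemma card_sign_vecs: "c \<noteq> 0 \<Longrightarrow> card (sign_vecs n c) = 2^n"
  using sum_exp_sign_vecs[where c=c and n=n and a="\<lambda>_. 0"] by (simp flip: of_nat_eq_iff)

lemma card_sign_vecs_ge_le:
  assumes c: "c > 0" and l: "l > 0"
  shows "real (card {x\<in>sign_vecs n c. (\<Sum>j<n. x j * a j) \<ge> u})
           \<le> exp (-l*u) * 2^n * exp (l^2 * c^2 * (\<Sum>j<n. (a j)^2) / 2)"
proof -
  let ?S = "{x\<in>sign_vecs n c. (\<Sum>j<n. x j * a j) \<ge> u}"
  let ?E = "\<lambda>x. exp (-l*u) * exp (\<Sum>j<n. x j * (l * a j))"
  have markov: "1 \<le> ?E x" if "x \<in> ?S" for x
  proof -
    have "l * u \<le> l * (\<Sum>j<n. x j * a j)" using that l by (simp add: mult_left_mono)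
    then have "0 \<le> -l*u + (\<Sum>j<n. x j * (l * a j))"
      by (simp add: sum_distrib_left algebra_simps)
    then show ?thesis by (simp flip: exp_add)
  qed
  have "real (card ?S) \<le> (\<Sum>x\<in>?S. ?E x)"
    using sum_mono[of ?S "\<lambda>_. 1" ?E] markov by simp
  also have "\<dots> \<le> (\<Sum>x\<in>sign_vecs n c. ?E x)"
    by (rule sum_mono2[OF finite_sign_vecs]) auto
  also have "\<dots> = exp (-l*u) * (\<Prod>j<n. 2 * cosh (c * (l * a j)))"
    using sum_exp_sign_vecs[where c=c and n=n and a="\<lambda>j. l * a j"] c by (simp flip: sum_distrib_left)
  also have "\<dots> \<le> exp (-l*u) * (\<Prod>j<n. 2 * exp ((c * (l * a j))^2 / 2))"
    using cosh_le_exp_half_square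
    by (intro mult_left_mono prod_mono) (auto intro: less_imp_le[OF cosh_real_pos])
  also have "(\<Prod>j<n. 2 * exp ((c * (l * a j))^2 / 2)) = 2^n * exp (l^2 * c^2 * (\<Sum>j<n. (a j)^2) / 2)"
    by (simp add: prod.distrib exp_sum sum_distrib_left sum_divide_distrib power_mult_distrib
        algebra_simps)
  finally show ?thesis by (simp add: mult.assoc)
qed

lemma finite_scaled_hcube: "finite (scaled_hcube d)"
  by (simp add: scaled_hcube_eq_sign_vecs finite_sign_vecs)

lemma card_scaled_hcube: "d > 0 \<Longrightarrow> card (scaled_hcube d) = 2^d"
  by (simp add: scaled_hcube_eq_sign_vecs card_sign_vecs)

lemma card_scaled_hcube_abs_inner_ge_le:
  assumes d: "d > 0" and y: "(\<Sum>j<d. (y j)^2) = 1" and u: "u \<ge> 0"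
  shows "real (card {v\<in>scaled_hcube d. \<bar>inner_d d v y\<bar> \<ge> u})
          \<le> 2 * exp (- (real d * u^2 / 2)) * real (card (scaled_hcube d))"
proof -
  let ?c = "1 / sqrt (real d)" and ?l = "real d * u"
  let ?T = "\<lambda>y. {x\<in>sign_vecs d ?c. (\<Sum>j<d. x j * y j) \<ge> u}"
  have c: "?c > 0" using d by simp
  have tail: "real (card (?T y')) \<le> exp (- (real d * u^2 / 2)) * 2^d"
    if y': "(\<Sum>j<d. (y' j)^2) = 1" for y'
  proof (cases "u = 0")
    case True
    then show ?thesis
      using card_mono[OF finite_sign_vecs, of "?T y'" d ?c] card_sign_vecs[where c="?c" and n=d] c by simp
  next
    case False
    then have l: "?l > 0" using d u by simp
    have "?l^2 * ?c^2 * 1 / 2 = real d * u^2 / 2"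
      using d by (simp add: power2_eq_square power_divide field_simps)
    moreover have "exp (-?l*u) * exp (real d * u^2 / 2) = exp (- (real d * u^2 / 2))"
      by (simp add: power2_eq_square field_simps flip: exp_add)
    ultimately have bound: "exp (-?l*u) * 2^d * exp (?l^2 * ?c^2 * 1 / 2) = exp (- (real d * u^2 / 2)) * 2^d"
      by (metis mult.commute mult.left_commute)
    show ?thesis
      using card_sign_vecs_ge_le[OF c l, where n=d and a=y' and u=u] unfolding y' bound .
  qed
  have "{v\<in>scaled_hcube d. \<bar>inner_d d v y\<bar> \<ge> u} \<subseteq> ?T y \<union> ?T (\<lambda>j. - y j)"
    by (auto simp: scaled_hcube_eq_sign_vecs inner_d_def sum_negf abs_if)
  then have "real (card {v\<in>scaled_hcube d. \<bar>inner_d d v y\<bar> \<ge> u})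
      \<le> real (card (?T y)) + real (card (?T (\<lambda>j. - y j)))"
  proof -
    have "card {v\<in>scaled_hcube d. \<bar>inner_d d v y\<bar> \<ge> u} \<le> card (?T y \<union> ?T (\<lambda>j. - y j))"
      by (rule card_mono[OF _ \<open>_ \<subseteq> _\<close>]) (simp add: finite_sign_vecs)
    also have "\<dots> \<le> card (?T y) + card (?T (\<lambda>j. - y j))" by (rule card_Un_le)
    finally show ?thesis by linarith
  qed
  also have "\<dots> \<le> 2 * exp (- (real d * u^2 / 2)) * 2^d"
    using tail[OF y] tail[of "\<lambda>j. - y j"] y by simp
  finally show ?thesis using card_scaled_hcube[OF d] by simp
qed

subsection \<open>Separated sets\<close>

lemma dist_d_commute: "dist_d d x y = dist_d d y x"
  unfolding dist_d_def by (simp add: power2_commute)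

lemma maximal_separated_is_net:
  assumes "finite X" "\<alpha> > 0"
  obtains P where "P \<subseteq> X" "separated d \<alpha> P" "\<forall>x\<in>X. \<exists>p\<in>P. dist_d d x p < \<alpha>"
proof -
  let ?F = "{P. P \<subseteq> X \<and> separated d \<alpha> P}"
  have finF: "finite ?F" using assms(1) by (simp add: finite_subset[of _ "Pow X"])
  have "{} \<in> ?F" by (simp add: separated_def)
  then have "Max (card ` ?F) \<in> card ` ?F" using finF by (intro Max_in) auto
  then obtain P where P: "P \<in> ?F" "card P = Max (card ` ?F)" by auto
  have max: "card Q \<le> card P" if "Q \<in> ?F" for Q
    using finF that P(2) by (simp add: Max_ge)
  have "\<exists>p\<in>P. dist_d d x p < \<alpha>" if x: "x \<in> X" for x
  proof (rule ccontr)
    assume "\<not> (\<exists>p\<in>P. dist_d d x p < \<alpha>)"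
    then have far: "\<forall>p\<in>P. dist_d d x p \<ge> \<alpha>" by auto
    then have "x \<notin> P" using assms(2) by (auto simp: dist_d_def)
    moreover have "insert x P \<in> ?F"
      using P(1) far x unfolding separated_def by (auto simp: dist_d_commute)
    moreover have "finite P" using P(1) assms(1) finite_subset by auto
    ultimately show False using max[of "insert x P"] by simp
  qed
  then show ?thesis using that P(1) by blast
qed

lemma card_le_packing_card:
  assumes "finite X" "P \<subseteq> X" "separated d \<alpha> P"
  shows "card P \<le> packing_card d X \<alpha>"
proof -
  let ?F = "{Y. Y \<subseteq> X \<and> finite Y \<and> separated d \<alpha> Y}"
  have "finite ?F" using assms(1) by (simp add: finite_subset[of _ "Pow X"])
  moreover have "P \<in> ?F" using assms finite_subset by auto
  ultimately show ?thesis unfolding packing_card_def by (intro Max_ge) auto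
qed

lemma indexed_net_exists:
  assumes "finite J" "\<alpha> > 0" "finite X" "y ` J \<subseteq> X"
  obtains I where "I \<subseteq> J" "card I \<le> packing_card d X \<alpha>"
    "\<forall>j\<in>J. \<exists>i\<in>I. dist_d d (y j) (y i) < \<alpha>"
proof -
  obtain P where P: "P \<subseteq> y ` J" "separated d \<alpha> P" "\<forall>x\<in>y ` J. \<exists>p\<in>P. dist_d d x p < \<alpha>"
    using maximal_separated_is_net[of "y ` J" \<alpha> d] assms(1,2) by blast
  have "\<forall>p\<in>P. \<exists>j\<in>J. y j = p" using P(1) by auto
  then obtain jf where jf: "\<forall>p\<in>P. jf p \<in> J \<and> y (jf p) = p" by metis
  have "finite P" using P(1) assms(1) finite_subset by blast
  then have "card (jf ` P) \<le> card P" by (rule card_image_le)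
  also have "card P \<le> packing_card d X \<alpha>"
    using card_le_packing_card[OF assms(3)] P(1,2) assms(4) by blast
  finally have "card (jf ` P) \<le> packing_card d X \<alpha>" .
  moreover have "\<forall>j\<in>J. \<exists>i\<in>jf ` P. dist_d d (y j) (y i) < \<alpha>"
    using P(3) jf by fastforce
  ultimately show ?thesis using that[of "jf ` P"] jf by blast
qed

lemma abs_inner_d_diff_le_dist_d:
  assumes "v \<in> scaled_hcube d" "d > 0"
  shows "\<bar>inner_d d v x - inner_d d v y\<bar> \<le> dist_d d x y"
proof -
  have "\<And>j. j < d \<Longrightarrow> (v j)^2 = 1 / real d"
    using assms(1) by (auto simp: scaled_hcube_def power_divide)
  then have unit: "(\<Sum>j<d. (v j)^2) = 1" using assms(2) by simp
  have "\<bar>inner_d d v x - inner_d d v y\<bar> = \<bar>\<Sum>j<d. v j * (x j - y j)\<bar>"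
    unfolding inner_d_def by (simp add: sum_subtractf algebra_simps)
  also have "\<dots> \<le> (\<Sum>j<d. \<bar>v j\<bar> * \<bar>x j - y j\<bar>)"
    by (rule order_trans[OF sum_abs]) (simp add: abs_mult)
  also have "\<dots> \<le> L2_set v {..<d} * L2_set (\<lambda>j. x j - y j) {..<d}"
    by (rule L2_set_mult_ineq)
  also have "\<dots> = dist_d d x y"
    by (simp add: L2_set_def dist_d_def unit)
  finally show ?thesis .
qed

subsection \<open>Counting tuples with few free coordinates\<close>

lemma prod_if_mem_const:
  assumes "finite U" "I \<subseteq> U"
  shows "(\<Prod>j\<in>U. if j \<in> I then (1::nat) else c) = c ^ (card U - card I)"
proof -
  have "(\<Prod>j\<in>U. if j \<in> I then (1::nat) else c) = (\<Prod>j\<in>U - I. c)"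
    using assms by (intro prod.mono_neutral_cong_right) auto
  also have "\<dots> = c ^ (card U - card I)"
    using assms by (simp add: card_Diff_subset finite_subset)
  finally show ?thesis .
qed

lemma card_PiE_trapped_le:
  fixes H :: "'a set" and S :: "nat set \<Rightarrow> (nat \<Rightarrow> 'a) \<Rightarrow> 'a set"
  assumes H: "finite H" and Fam: "Fam \<subseteq> Pow {..<N}" and q: "q \<ge> 0"
    and S: "\<And>I w. I \<in> Fam \<Longrightarrow> w \<in> PiE I (\<lambda>_. H) \<Longrightarrow>
              S I w \<subseteq> H \<and> real (card (S I w)) \<le> q * real (card H)"
  shows "real (card {Vt\<in>PiE {..<N} (\<lambda>_. H). \<exists>I\<in>Fam. \<forall>j\<in>{..<N}-I. Vt j \<in> S I (restrict Vt I)})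
           \<le> real (card H)^N * (\<Sum>I\<in>Fam. q^(N - card I))"
proof -
  let ?U = "{..<N}"
  let ?F = "\<lambda>I w j. if j \<in> I then {w j} else S I w"
  let ?T = "\<lambda>I w. PiE ?U (?F I w)"
  have finFam: "finite Fam" using Fam by (rule finite_subset) simp
  have IU: "I \<subseteq> ?U" "finite I" if "I \<in> Fam" for I
    using that Fam finite_subset by auto
  have finT: "finite (?T I w)" if "I \<in> Fam" "w \<in> PiE I (\<lambda>_. H)" for I w
    using S[OF that] H by (intro finite_PiE) (auto intro: finite_subset)
  have cardT: "real (card (?T I w)) \<le> (q * real (card H)) ^ (N - card I)"
    if I: "I \<in> Fam" and w: "w \<in> PiE I (\<lambda>_. H)" for I w
  proof -
    have "card (?T I w) = (\<Prod>j\<in>?U. if j \<in> I then 1 else card (S I w))"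
      by (simp add: card_PiE if_distrib cong: if_cong)
    also have "\<dots> = card (S I w) ^ (N - card I)" using prod_if_mem_const[OF _ IU(1)[OF I]] by simp
    finally show ?thesis using S[OF I w] by (simp add: power_mono)
  qed
  have cover: "{Vt\<in>PiE ?U (\<lambda>_. H). \<exists>I\<in>Fam. \<forall>j\<in>?U-I. Vt j \<in> S I (restrict Vt I)}
      \<subseteq> (\<Union>I\<in>Fam. \<Union>w\<in>PiE I (\<lambda>_. H). ?T I w)"
  proof clarify
    fix Vt I assume Vt: "Vt \<in> PiE ?U (\<lambda>_. H)" and I: "I \<in> Fam"
      and h: "\<forall>j\<in>?U-I. Vt j \<in> S I (restrict Vt I)"
    have "restrict Vt I \<in> PiE I (\<lambda>_. H)" using Vt IU[OF I] by (auto simp: PiE_iff)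
    moreover have "Vt \<in> ?T I (restrict Vt I)" using Vt h by (auto simp: PiE_iff)
    ultimately show "Vt \<in> (\<Union>I\<in>Fam. \<Union>w\<in>PiE I (\<lambda>_. H). ?T I w)" using I by blast
  qed
  have "real (card {Vt\<in>PiE ?U (\<lambda>_. H). \<exists>I\<in>Fam. \<forall>j\<in>?U-I. Vt j \<in> S I (restrict Vt I)})
      \<le> (\<Sum>I\<in>Fam. \<Sum>w\<in>PiE I (\<lambda>_. H). real (card (?T I w)))"
  proof -
    have "finite (\<Union>I\<in>Fam. \<Union>w\<in>PiE I (\<lambda>_. H). ?T I w)"
    proof (intro finite_UN_I finFam)
      show "finite (PiE I (\<lambda>_. H))" if "I \<in> Fam" for I
        using IU[OF that] H by (simp add: finite_PiE)
    qed (rule finT)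
    then have "card {Vt\<in>PiE ?U (\<lambda>_. H). \<exists>I\<in>Fam. \<forall>j\<in>?U-I. Vt j \<in> S I (restrict Vt I)}
        \<le> card (\<Union>I\<in>Fam. \<Union>w\<in>PiE I (\<lambda>_. H). ?T I w)"
      using cover by (rule card_mono)
    also have "\<dots> \<le> (\<Sum>I\<in>Fam. \<Sum>w\<in>PiE I (\<lambda>_. H). card (?T I w))"
      using finFam IU H
      by (intro order_trans[OF card_UN_le] sum_mono card_UN_le finite_PiE) auto
    finally show ?thesis by (simp flip: of_nat_sum)
  qed
  also have "\<dots> \<le> (\<Sum>I\<in>Fam. \<Sum>w\<in>PiE I (\<lambda>_. H). (q * real (card H)) ^ (N - card I))"
    using cardT by (intro sum_mono) auto
  also have "\<dots> = (\<Sum>I\<in>Fam. real (card H)^N * q^(N - card I))"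
  proof (intro sum.cong refl)
    fix I assume I: "I \<in> Fam"
    then have "card I \<le> N" using card_mono[OF _ IU(1)] by fastforce
    then have "real (card H)^card I * (q * real (card H)) ^ (N - card I) = real (card H)^N * q^(N - card I)"
      by (simp add: power_mult_distrib algebra_simps flip: power_add)
    then show "(\<Sum>w\<in>PiE I (\<lambda>_. H). (q * real (card H)) ^ (N - card I)) = real (card H)^N * q^(N - card I)"
      using IU(2)[OF I] by (simp add: card_PiE)
  qed
  finally show ?thesis by (simp add: sum_distrib_left)
qed

lemma sum_pow_small_subsets_le:
  fixes K q :: real
  assumes M: "M = nat \<lfloor>K\<rfloor>" and N: "N \<ge> 1" and q: "0 \<le> q" "q \<le> 1" and MN: "M \<le> N"
  shows "(\<Sum>I\<in>{I. I \<subseteq> {..<N} \<and> real (card I) < K}. q^(N - card I)) \<le> real (M+1) * real N^M * q^(N-M)"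
proof -
  let ?Fam = "{I. I \<subseteq> {..<N} \<and> real (card I) < K}"
  have cM: "card I \<le> M" if "I \<in> ?Fam" for I
    using that M by (simp add: le_nat_floor less_imp_le)
  have "(\<Sum>I\<in>?Fam. q^(N - card I)) \<le> (\<Sum>I\<in>?Fam. q^(N - M))"
    using cM q by (intro sum_mono power_decreasing) (auto simp: diff_le_mono2)
  also have "\<dots> = real (card ?Fam) * q^(N-M)" by simp
  also have "\<dots> \<le> real (M+1) * real N^M * q^(N-M)"
  proof (rule mult_right_mono)
    have "card ?Fam \<le> card (\<Union>m\<in>{..M}. {I. I \<subseteq> {..<N} \<and> card I = m})"
      using cM by (intro card_mono) (auto intro: finite_subset[of _ "Pow {..<N}"])
    also have "\<dots> \<le> (\<Sum>m\<in>{..M}. N choose m)"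
      using card_UN_le[of "{..M}" "\<lambda>m. {I. I \<subseteq> {..<N} \<and> card I = m}"] by (simp add: n_subsets)
    also have "\<dots> \<le> (\<Sum>m\<in>{..M}. N^M)"
    proof (rule sum_mono)
      fix m assume "m \<in> {..M}"
      then have "N choose m \<le> N^m" "N^m \<le> N^M"
        using MN N by (auto intro: binomial_le_pow power_increasing)
      then show "N choose m \<le> N^M" by linarith
    qed
    finally have "real (card ?Fam) \<le> real ((M+1) * N^M)" by (simp only: of_nat_le_iff) simp
    then show "real (card ?Fam) \<le> real (M+1) * real N^M" by (simp add: algebra_simps)
  qed (use q in simp)
  finally show ?thesis .
qed

lemma card_filter_add_card_filter_not:
  assumes "finite \<Omega>"
  shows "card {x\<in>\<Omega>. P x} + card {x\<in>\<Omega>. \<not> P x} = card \<Omega>"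
proof -
  have "card {x\<in>\<Omega>. P x} + card {x\<in>\<Omega>. \<not> P x} = card ({x\<in>\<Omega>. P x} \<union> {x\<in>\<Omega>. \<not> P x})"
    using assms by (intro card_Un_disjoint[symmetric]) auto
  also have "{x\<in>\<Omega>. P x} \<union> {x\<in>\<Omega>. \<not> P x} = \<Omega>" by auto
  finally show ?thesis .
qed

subsection \<open>Numerical estimates\<close>

lemma half_square_le_exp: "(x::real) \<ge> 0 \<Longrightarrow> (x/2)^2 \<le> exp x"
proof -
  assume x: "x \<ge> 0"
  have "x/2 \<le> exp (x/2)" using exp_ge_add_one_self[of "x/2"] by linarith
  then have "(x/2)^2 \<le> exp (x/2) ^ 2" using x by (intro power_mono) auto
  also have "exp (x/2) ^ 2 = exp x" by (simp flip: exp_of_nat_mult)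
  finally show ?thesis .
qed

lemma net_count_le_exp:
  fixes s c1 K :: real
  assumes s: "s \<ge> 500" and c1: "0 < c1" "c1 \<le> 1/8" and K: "K = exp (c1 * s)"
    and N: "N = nat \<lceil>16 * s * K\<rceil>" and M: "M = nat \<lfloor>K\<rfloor>"
  shows "real (M+1) * real N^M * (7/8)^(N-M) \<le> exp (- s / 2)"
proof -
  have K1: "K \<ge> 1" and Kle: "K \<le> exp (s/8)" using K c1 s by auto
  have MK: "real M \<le> K" using M K1 by linarith
  have sK: "s * K \<ge> s" "s * K \<ge> 500 * K"
    using K1 s by (simp_all add: mult_left_mono mult_right_mono)
  have NN: "real N = of_int \<lceil>16 * s * K\<rceil>" using N K1 s by simp
  have Nlo: "real N \<ge> 16 * s * K" using NN by simp
  have Nhi: "real N \<le> 17 * s * K" using NN ceiling_correct[of "16 * s * K"] sK s by linarith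
  have "real M \<le> real N" using MK Nlo sK by linarith
  then have MN: "M \<le> N" by simp
  have "real (M+1) \<le> exp (real M)" using exp_ge_add_one_self[of "real M"] by simp
  also have "\<dots> \<le> exp K" using MK by simp
  finally have e1: "real (M+1) \<le> exp K" .
  have N_exp: "real N \<le> exp (s/2)"
  proof -
    have "17 \<le> (9/256) * s" using s by simp
    then have "17 * s \<le> (3/16 * s)^2" using s by (simp add: power2_eq_square mult_right_mono)
    also have "\<dots> \<le> exp (3/8 * s)" using half_square_le_exp[of "3/8 * s"] s by simp
    finally have "17 * s * K \<le> exp (3/8 * s) * exp (s/8)"
      using Kle K1 s by (intro mult_mono) auto
    also have "\<dots> = exp (s/2)" by (simp flip: exp_add)
    finally show ?thesis using Nhi by simp
  qed
  have e2: "real N ^ M \<le> exp (s * K / 2)"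
  proof -
    have "real N ^ M \<le> exp (s/2) ^ M" using N_exp by (intro power_mono) auto
    also have "\<dots> = exp (real M * (s/2))" by (simp flip: exp_of_nat_mult)
    also have "\<dots> \<le> exp (s * K / 2)" using MK s by (simp add: mult_right_mono)
    finally show ?thesis .
  qed
  have e3: "(7/8::real)^(N-M) \<le> exp (- (16 * s * K - K) / 8)"
  proof -
    have "(7/8::real) \<le> exp (-1/8)" using exp_ge_add_one_self[of "-1/8"] by simp
    then have "(7/8::real)^(N-M) \<le> exp (-1/8)^(N-M)" by (intro power_mono) auto
    also have "\<dots> = exp (real (N-M) * (-1/8))" by (simp flip: exp_of_nat_mult)
    also have "\<dots> \<le> exp (- (16 * s * K - K) / 8)"
    proof -
      have "real (N-M) \<ge> 16 * s * K - K" using MN Nlo MK by (simp add: of_nat_diff)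
      then show ?thesis by simp
    qed
    finally show ?thesis .
  qed
  have "real (M+1) * real N^M * (7/8)^(N-M) \<le> exp K * exp (s * K / 2) * exp (- (16 * s * K - K) / 8)"
    using e1 e2 e3 by (intro mult_mono) auto
  also have "\<dots> = exp (9/8 * K - 3/2 * (s * K))" by (simp flip: exp_add add: field_simps)
  also have "\<dots> \<le> exp (- s / 2)"
  proof -
    have "9/8 * K - 3/2 * (s * K) \<le> - s / 2" using sK K1 by linarith
    then show ?thesis by simp
  qed
  finally show ?thesis .
qed

lemma large_d_scales:
  fixes \<delta> :: real and d :: nat
  assumes \<delta>: "0 < \<delta>" "\<delta> < 1" and d: "d \<ge> 250000"
  defines "s \<equiv> real d powr (1 - \<delta>/2) * (ln (real d))^2"
  shows "s \<ge> 500" and "real d powr (-8) \<le> sqrt (s / real d) / 4"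
proof -
  have d1: "real d \<ge> 250000" using d by simp
  have "exp 1 \<le> real d" using exp_le d1 by linarith
  then have "ln (real d) \<ge> 1" using d1 by (simp add: ln_ge_iff)
  then have ln2: "(ln (real d))^2 \<ge> 1" by (simp add: one_le_power)
  have "real d powr (1/2) \<le> real d powr (1 - \<delta>/2)" using \<delta> d1 by (intro powr_mono) auto
  then have "sqrt (real d) \<le> real d powr (1 - \<delta>/2)" by (simp add: powr_half_sqrt)
  moreover have sqd: "sqrt (real d) \<ge> 500" using real_le_rsqrt[of 500 "real d"] d1 by simp
  ultimately have ss: "s \<ge> sqrt (real d)"
    unfolding s_def using ln2 mult_mono[of "sqrt (real d)" _ 1] by fastforce
  then show "s \<ge> 500" using sqd by linarith
  have "1 / real d \<le> s / real d" using ss sqd d1 by (intro divide_right_mono) auto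
  then have A: "1 / sqrt (real d) \<le> sqrt (s / real d)"
    by (metis real_sqrt_divide real_sqrt_le_iff real_sqrt_one)
  have "4 * sqrt (real d) \<le> sqrt (real d) * sqrt (real d)" using sqd by (intro mult_right_mono) auto
  also have "\<dots> \<le> real d ^ 8" using d1 by (simp add: self_le_power)
  finally have B: "4 * sqrt (real d) \<le> real d ^ 8" .
  have "real d powr (-8) = 1 / real d ^ 8" using d1 by (simp add: powr_minus powr_realpow divide_inverse)
  also have "\<dots> \<le> 1 / (4 * sqrt (real d))" using B d1 by (intro divide_left_mono) auto
  also have "\<dots> \<le> sqrt (s / real d) / 4" using A by simp
  finally show "real d powr (-8) \<le> sqrt (s / real d) / 4" .
qed

definition answer :: "((nat \<Rightarrow> nat \<Rightarrow> real) \<Rightarrow> bool list)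
    \<Rightarrow> ((nat \<Rightarrow> nat \<Rightarrow> real) \<Rightarrow> (nat \<Rightarrow> real) \<Rightarrow> (nat \<Rightarrow> real) option list) \<Rightarrow> out_fn
    \<Rightarrow> (nat \<Rightarrow> nat \<Rightarrow> real) \<Rightarrow> (nat \<Rightarrow> real) \<Rightarrow> (nat \<Rightarrow> real)" where
  "answer msg resp out A v = out (msg A) v (resp A v)"

lemma succeeds_iff:
  "succeeds d s xi' msg resp out A v \<longleftrightarrow>
     inf_norm_le (d div 2) d A (answer msg resp out A v) xi' \<and>
     \<bar>inner_d d v (answer msg resp out A v)\<bar> \<ge> sqrt (s / d)"
  by (simp add: succeeds_def answer_def Let_def)

lemma protocol_resp:
  assumes "is_protocol d k n msg resp out" "A \<in> sign_mats (d div 2) d" "v \<in> scaled_hcube d"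
  shows "length (resp A v) = n" "rows_sub (d div 2) A (resp A v)"
  using assms unfolding is_protocol_def by blast+

lemma protocol_answer_unit:
  assumes prot: "is_protocol d k n msg resp out" and A: "A \<in> sign_mats (d div 2) d"
    and v: "v \<in> scaled_hcube d"
  shows "answer msg resp out A v \<in> unit_sphere_d d"
proof -
  have "length (msg A) = k * d" using prot A unfolding is_protocol_def by blast
  moreover have "r = None \<or> (\<exists>h\<in>hcube d. r = Some h)" if "r \<in> set (resp A v)" for r
    using protocol_resp(2)[OF prot A v] that A unfolding rows_sub_def sign_mats_def by blast
  ultimately show ?thesis
    using prot v protocol_resp(1)[OF prot A v] unfolding is_protocol_def answer_def by blast
qed

lemma answer_in_orth_entries:
  assumes prot: "is_protocol d k n msg resp out" and A: "A \<in> sign_mats (d div 2) d"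
    and v: "v \<in> V" "V \<subseteq> scaled_hcube d" and succ: "succeeds d s xi' msg resp out A v"
  shows "answer msg resp out A v \<in> orth_entries d n (d div 2) xi' out (msg A) A V"
  using succ v protocol_resp[OF prot A, of v]
  unfolding orth_entries_def table_def succeeds_iff answer_def by blast

lemma finite_orth_entries:
  assumes "finite V"
  shows "finite (orth_entries d n m xi' out M B V)"
proof -
  let ?Z = "insert None ((\<lambda>i. Some (B i)) ` {..<m})"
  have "{R. length R = n \<and> rows_sub m B R} \<subseteq> {R. set R \<subseteq> ?Z \<and> length R = n}"
    unfolding rows_sub_def by auto
  then have "finite {R. length R = n \<and> rows_sub m B R}"
    by (rule finite_subset) (simp add: finite_lists_length_eq)
  moreover have "table n m out M B V = (\<lambda>(v,R). out M v R) ` (V \<times> {R. length R = n \<and> rows_sub m B R})"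
    unfolding table_def by auto
  ultimately have "finite (table n m out M B V)" using assms by simp
  then show ?thesis unfolding orth_entries_def by simp
qed

subsection \<open>Trapped queries\<close>

text \<open>At most 3/4 of the queries are bad since A is successful, and by the Chernoff bound each
  answer correlates with at most a 2 exp(-s/4) fraction of them.\<close>
lemma card_trapped_queries_le:
  assumes d: "d > 0" and prot: "is_protocol d k n msg resp out"
    and Asuc: "A \<in> A_suc d s xi' msg resp out"
    and s: "s \<ge> 500" and c1: "0 < c1" "c1 \<le> 1/8" and \<alpha>: "\<alpha> \<le> sqrt (s / d) / 4"
    and I: "finite I" "real (card I) \<le> exp (c1 * s)" and w: "w \<in> PiE I (\<lambda>_. scaled_hcube d)"
  shows "real (card {v\<in>scaled_hcube d. \<not> succeeds d s xi' msg resp out A v \<or>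
            (\<exists>i\<in>I. sqrt (s / d) - \<alpha> \<le> \<bar>inner_d d v (answer msg resp out A (w i))\<bar>)})
         \<le> 7/8 * real (card (scaled_hcube d))"
proof -
  let ?H = "scaled_hcube d" and ?u = "sqrt (s / d) - \<alpha>"
  let ?Bad = "{v\<in>?H. \<not> succeeds d s xi' msg resp out A v}"
  let ?Tail = "\<lambda>i. {v\<in>?H. ?u \<le> \<bar>inner_d d v (answer msg resp out A (w i))\<bar>}"
  have A: "A \<in> sign_mats (d div 2) d" using Asuc unfolding A_suc_def by simp
  have "real (card ?Bad) \<le> 3/4 * real (card ?H)"
    using Asuc card_filter_add_card_filter_not[OF finite_scaled_hcube[of d],
        where P="succeeds d s xi' msg resp out A"]
    unfolding A_suc_def by simp
  have u: "0 \<le> ?u" "- (real d * ?u^2 / 2) \<le> - s / 4"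
  proof -
    have u34: "?u \<ge> 3/4 * sqrt (s / d)" using \<alpha> by simp
    moreover have "sqrt (s / d) \<ge> 0" using s by simp
    ultimately show "0 \<le> ?u" by linarith
    have "9/16 * (s / d) = (3/4 * sqrt (s / d))^2"
      using s by (simp add: power_mult_distrib power2_eq_square)
    also have "\<dots> \<le> ?u^2" using u34 s by (intro power_mono) auto
    finally show "- (real d * ?u^2 / 2) \<le> - s / 4"
      using d mult_left_mono[of "9/16 * (s / d)" "?u^2" "real d"] s by simp
  qed
  have tail: "real (card (?Tail i)) \<le> 2 * exp (- s / 4) * real (card ?H)" if "i \<in> I" for i
  proof -
    have "answer msg resp out A (w i) \<in> unit_sphere_d d"
      using protocol_answer_unit[OF prot A] w that by auto
    then have "real (card (?Tail i)) \<le> 2 * exp (- (real d * ?u^2 / 2)) * real (card ?H)"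
      using card_scaled_hcube_abs_inner_ge_le[OF d _ u(1)] unfolding unit_sphere_d_def by simp
    also have "\<dots> \<le> 2 * exp (- s / 4) * real (card ?H)"
      using u(2) by (intro mult_left_mono mult_right_mono) auto
    finally show ?thesis .
  qed
  have "real (card I) * (2 * exp (- s / 4)) \<le> exp (c1 * s) * (2 * exp (- s / 4))"
    using I(2) by (intro mult_right_mono) auto
  also have "\<dots> = 2 * exp (c1 * s - s / 4)" using exp_add[of "c1 * s" "- s / 4"] by simp
  also have "\<dots> \<le> 2 * exp (- s / 8)"
  proof -
    have "c1 * s \<le> 1/8 * s" using c1 s by (intro mult_right_mono) auto
    then show ?thesis by simp
  qed
  also have "\<dots> \<le> 1/8"
    using exp_ge_add_one_self[of "s/8"] s by (simp add: exp_minus field_simps)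
  finally have small: "real (card I) * (2 * exp (- s / 4)) \<le> 1/8" .
  have "card {v\<in>?H. \<not> succeeds d s xi' msg resp out A v \<or> (\<exists>i\<in>I. ?u \<le> \<bar>inner_d d v (answer msg resp out A (w i))\<bar>)}
      \<le> card (?Bad \<union> (\<Union>i\<in>I. ?Tail i))"
    using I(1) by (intro card_mono) (auto simp: finite_scaled_hcube)
  also have "\<dots> \<le> card ?Bad + (\<Sum>i\<in>I. card (?Tail i))"
    by (rule order_trans[OF card_Un_le add_left_mono[OF card_UN_le[OF I(1)]]])
  finally have "real (card {v\<in>?H. \<not> succeeds d s xi' msg resp out A v \<or> (\<exists>i\<in>I. ?u \<le> \<bar>inner_d d v (answer msg resp out A (w i))\<bar>)})
      \<le> real (card ?Bad) + (\<Sum>i\<in>I. real (card (?Tail i)))"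
    by (simp flip: of_nat_sum of_nat_add)
  also have "\<dots> \<le> 3/4 * real (card ?H) + real (card I) * (2 * exp (- s / 4)) * real (card ?H)"
  proof (rule add_mono)
    have "(\<Sum>i\<in>I. real (card (?Tail i))) \<le> (\<Sum>i\<in>I. 2 * exp (- s / 4) * real (card ?H))"
      using tail by (rule sum_mono)
    then show "(\<Sum>i\<in>I. real (card (?Tail i))) \<le> real (card I) * (2 * exp (- s / 4)) * real (card ?H)"
      by simp
  qed fact
  also have "\<dots> \<le> 7/8 * real (card ?H)"
    using small mult_right_mono[OF small, of "real (card ?H)"] by simp
  finally show ?thesis .
qed

text \<open>The index set I of the counting argument comes from a net of the good answers.\<close>
lemma trapped_of_small_packing:
  fixes N :: nat
  assumes d: "d > 0" and prot: "is_protocol d k n msg resp out" and A: "A \<in> sign_mats (d div 2) d"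
    and \<alpha>: "\<alpha> > 0" and Vt: "Vt \<in> PiE {..<N} (\<lambda>_. scaled_hcube d)"
    and small: "real (packing_card d (orth_entries d n (d div 2) xi' out (msg A) A (Vt ` {..<N})) \<alpha>) < K"
  obtains I where "I \<subseteq> {..<N}" "real (card I) < K"
    "\<forall>j\<in>{..<N} - I. \<not> succeeds d s xi' msg resp out A (Vt j) \<or>
       (\<exists>i\<in>I. sqrt (s / d) - \<alpha> \<le> \<bar>inner_d d (Vt j) (answer msg resp out A (Vt i))\<bar>)"
proof -
  let ?J = "{j\<in>{..<N}. succeeds d s xi' msg resp out A (Vt j)}"
  let ?y = "\<lambda>j. answer msg resp out A (Vt j)"
  let ?X = "orth_entries d n (d div 2) xi' out (msg A) A (Vt ` {..<N})"
  have VtH: "Vt ` {..<N} \<subseteq> scaled_hcube d" using Vt by auto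
  have "?y j \<in> ?X" if "j \<in> ?J" for j
    using that by (intro answer_in_orth_entries[OF prot A _ VtH]) auto
  then have yX: "?y ` ?J \<subseteq> ?X" by blast
  have finX: "finite ?X" by (intro finite_orth_entries finite_imageI) simp
  have finJ: "finite ?J" by simp
  obtain I where I: "I \<subseteq> ?J" "card I \<le> packing_card d ?X \<alpha>"
      and net: "\<forall>j\<in>?J. \<exists>i\<in>I. dist_d d (?y j) (?y i) < \<alpha>"
    using indexed_net_exists[OF finJ \<alpha> finX yX] by blast
  have "\<exists>i\<in>I. sqrt (s / d) - \<alpha> \<le> \<bar>inner_d d (Vt j) (?y i)\<bar>" if j: "j \<in> ?J" for j
  proof -
    obtain i where "i \<in> I" "dist_d d (?y j) (?y i) < \<alpha>" using net j by blast
    moreover have "\<bar>inner_d d (Vt j) (?y j)\<bar> \<ge> sqrt (s / d)" using j succeeds_iff by blast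
    moreover have "\<bar>inner_d d (Vt j) (?y j) - inner_d d (Vt j) (?y i)\<bar> \<le> dist_d d (?y j) (?y i)"
      using j Vt d by (intro abs_inner_d_diff_le_dist_d) auto
    ultimately show ?thesis by force
  qed
  then show ?thesis using that[of I] I small by fastforce
qed

lemma packing_card_orth_entries_whp:
  fixes d n k N :: nat and s c1 K xi' :: real
  assumes d: "d > 0" and prot: "is_protocol d k n msg resp out"
    and Asuc: "A \<in> A_suc d s xi' msg resp out"
    and s: "s \<ge> 500" and c1: "0 < c1" "c1 \<le> 1/8" and K: "K = exp (c1 * s)"
    and N: "N = nat \<lceil>16 * s * K\<rceil>"
    and \<alpha>: "real d powr (-8) \<le> sqrt (s / real d) / 4"
  shows "real (card {Vt \<in> PiE {..<N} (\<lambda>_. scaled_hcube d).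
            real (packing_card d (orth_entries d n (d div 2) xi' out (msg A) A (Vt ` {..<N}))
              (real d powr (-8))) \<ge> K})
         \<ge> (1 - exp (- s / 2)) * real (card (PiE {..<N} (\<lambda>_. scaled_hcube d)))"
proof -
  let ?H = "scaled_hcube d" and ?\<alpha> = "real d powr (-8)"
  let ?\<Omega> = "PiE {..<N} (\<lambda>_. ?H)"
  let ?packs = "\<lambda>Vt. K \<le> real (packing_card d (orth_entries d n (d div 2) xi' out (msg A) A (Vt ` {..<N})) ?\<alpha>)"
  define S :: "nat set \<Rightarrow> (nat \<Rightarrow> nat \<Rightarrow> real) \<Rightarrow> (nat \<Rightarrow> real) set"
    where "S I w = {v\<in>?H. \<not> succeeds d s xi' msg resp out A v \<or>
      (\<exists>i\<in>I. sqrt (s / d) - ?\<alpha> \<le> \<bar>inner_d d v (answer msg resp out A (w i))\<bar>)}" for I w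
  define Fam where "Fam = {I. I \<subseteq> {..<N} \<and> real (card I) < K}"
  let ?Trapped = "{Vt\<in>?\<Omega>. \<exists>I\<in>Fam. \<forall>j\<in>{..<N}-I. Vt j \<in> S I (restrict Vt I)}"
  have A: "A \<in> sign_mats (d div 2) d" using Asuc unfolding A_suc_def by simp
  have \<alpha>_pos: "?\<alpha> > 0" using d by simp
  have "{Vt\<in>?\<Omega>. \<not> ?packs Vt} \<subseteq> ?Trapped"
  proof clarify
    fix Vt assume Vt: "Vt \<in> ?\<Omega>" and "\<not> ?packs Vt"
    then have small: "real (packing_card d (orth_entries d n (d div 2) xi' out (msg A) A (Vt ` {..<N})) ?\<alpha>) < K"
      by simp
    obtain I where I: "I \<subseteq> {..<N}" "real (card I) < K" and
      trapped: "\<forall>j\<in>{..<N} - I. \<not> succeeds d s xi' msg resp out A (Vt j) \<or>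
         (\<exists>i\<in>I. sqrt (s / d) - ?\<alpha> \<le> \<bar>inner_d d (Vt j) (answer msg resp out A (Vt i))\<bar>)"
      by (rule trapped_of_small_packing[OF d prot A \<alpha>_pos Vt small])
    have "\<forall>j\<in>{..<N}-I. Vt j \<in> S I (restrict Vt I)"
      using trapped Vt unfolding S_def by auto
    then show "\<exists>I\<in>Fam. \<forall>j\<in>{..<N}-I. Vt j \<in> S I (restrict Vt I)" using I unfolding Fam_def by blast
  qed
  moreover have "real (card ?Trapped) \<le> real (card ?H)^N * exp (- s / 2)"
  proof -
    define M where "M = nat \<lfloor>K\<rfloor>"
    have K1: "K \<ge> 1" using K c1 s by simp
    have "real N \<ge> 16 * s * K" using N K1 s by simp
    moreover have "16 * s * K \<ge> K" using K1 s by simp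
    ultimately have MN: "M \<le> N" and N1: "N \<ge> 1" unfolding M_def using K1 by linarith+
    have "real (card ?Trapped) \<le> real (card ?H)^N * (\<Sum>I\<in>Fam. (7/8)^(N - card I))"
    proof (rule card_PiE_trapped_le[OF finite_scaled_hcube])
      fix I w assume I: "I \<in> Fam" and w: "w \<in> PiE I (\<lambda>_. ?H)"
      have "finite I" "real (card I) \<le> exp (c1 * s)"
        using I K unfolding Fam_def by (auto intro: finite_subset)
      then show "S I w \<subseteq> ?H \<and> real (card (S I w)) \<le> 7/8 * real (card ?H)"
        unfolding S_def using card_trapped_queries_le[OF d prot Asuc s c1 \<alpha> _ _ w] by auto
    qed (auto simp: Fam_def)
    also have "(\<Sum>I\<in>Fam. (7/8::real)^(N - card I)) \<le> real (M+1) * real N^M * (7/8)^(N-M)"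
      unfolding Fam_def by (rule sum_pow_small_subsets_le[OF M_def N1 _ _ MN]) auto
    also have "\<dots> \<le> exp (- s / 2)" by (rule net_count_le_exp[OF s c1 K N M_def])
    finally show ?thesis by (simp add: mult_left_mono)
  qed
  ultimately have "real (card {Vt\<in>?\<Omega>. \<not> ?packs Vt}) \<le> exp (- s / 2) * real (card ?\<Omega>)"
    using card_mono[of ?Trapped "{Vt\<in>?\<Omega>. \<not> ?packs Vt}"]
    by (simp add: finite_PiE finite_scaled_hcube card_PiE mult.commute)
  then show ?thesis
    using card_filter_add_card_filter_not[of ?\<Omega> ?packs] finite_PiE[of "{..<N}" "\<lambda>_. ?H"]
    by (simp add: finite_scaled_hcube algebra_simps)
qed

theorem lemma5p4:
  shows "\<exists>c0>0. \<forall>c1::real. 0 < c1 \<and> c1 \<le> c0 \<longrightarrow>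
    (\<forall>(\<delta>::real) (kf::nat \<Rightarrow> nat).
       0 < \<delta> \<and> \<delta> < 1 \<and> ((\<lambda>d. ln (real (kf d)) / ln (real d)) \<longlongrightarrow> 1 - \<delta>) at_top \<longrightarrow>
       (\<exists>d0::nat. \<forall>d\<ge>d0. even d \<longrightarrow>
         (let s = real d powr (1 - \<delta>/2) * (ln (real d))^2;
              xi = 2 * exp (- ((ln (real d))^5));
              xi' = sqrt (real d) * xi;
              K = exp (c1 * s);
              N = nat \<lceil>16 * s * K\<rceil>;
              k = kf d
          in \<forall>(n::nat) msg resp out.
               is_protocol d k n msg resp out \<and>
               real (card {(A, v) \<in> sign_mats (d div 2) d \<times> scaled_hcube d.
                             succeeds d s xi' msg resp out A v})
                 \<ge> 1/2 * real (card (sign_mats (d div 2) d \<times> scaled_hcube d))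
               \<longrightarrow> (\<forall>A\<in>A_suc d s xi' msg resp out.
                     real (card {Vt \<in> PiE {..<N} (\<lambda>_. scaled_hcube d).
                        real (packing_card d
                           (orth_entries d n (d div 2) xi' out (msg A) A (Vt ` {..<N}))
                           (real d powr (-8))) \<ge> K})
                     \<ge> (1 - exp (- s / 2)) * real (card (PiE {..<N} (\<lambda>_. scaled_hcube d)))))))"
proof (unfold Let_def, intro exI[of _ "1/8::real"] conjI allI impI exI[of _ "250000::nat"] ballI,
    goal_cases)
  case 1
  show ?case by simp
next
  case (2 c1 \<delta> kf d n msg resp out A)
  then have c1: "0 < c1" "c1 \<le> 1/8" and \<delta>: "0 < \<delta>" "\<delta> < 1" and d: "250000 \<le> d" by auto
  note scales = large_d_scales[OF \<delta> d]
  show ?case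
    by (rule packing_card_orth_entries_whp[OF _ _ _ scales(1) c1 refl refl scales(2)]) (use 2 d in auto)
qed

end
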